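(* Let $G$ be a finite undirected graph, $\tau\ge1$ an odd integer, and $e=(u,v)\in E(G)$. Then $\phi_\tau(e,G)\ge|V(\Omega(e))|$.
   Context: Graphs are finite, simple, undirected and unweighted; paths may repeat vertices and their length is the number of edges. For vertices $v,u$ of a graph $H$, $u$ is $t$-hop reachable from $v$ in $H$ (written $u\rightarrow_t v$) if there is a path between them in $H$ of length at most $t$. $N_t(v,H)$ is the set of vertices $u\ne v$ that are $t$-hop reachable from $v$ in $H$. For an edge $e=(u,v)$ of $H$, $\Delta_t(e,H)=N_t(u,H)\cap N_t(v,H)$ and $\mathrm{sup}_t(e,H)=|\Delta_t(e,H)|$. The $(k,\tau)$-truss of $G$ is the maximal subgraph $G'$ of $G$ such that $\mathrm{sup}_\tau(e,G')\ge k-2$ for every $e\in E(G')$ (supports computed inside $G'$) and no more edges of $G$ can be added while keeping this property. The higher-order truss number $\phi_\tau(e,G)$ is the maximum $k$ such that $e$ belongs to the $(k,\tau)$-truss of $G$. For odd $\tau$ and an edge $e=(u,v)$, the edge centric $\tau$-diameter subgraph $\Omega(e)$ is the subgraph of $G$ induced by $\{u\}\cup\{v\}\cup\{w : w\rightarrow_{\lfloor\tau/2\rfloor} u \text{ or } w\rightarrow_{\lfloor\tau/2\rfloor} v \text{ in } G\}$. *)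

theory Defs
  imports Main
begin

definition simple_graph :: "'a set \<Rightarrow> 'a set set \<Rightarrow> bool" where
  "simple_graph V E \<longleftrightarrow> finite V \<and> (\<forall>e\<in>E. \<exists>x y. e = {x, y} \<and> x \<noteq> y \<and> x \<in> V \<and> y \<in> V)"

text \<open>A path (vertices may repeat) given as a nonempty vertex list whose consecutive
vertices are adjacent in edge set H; its length is the number of edges.\<close>
definition is_path :: "'a set set \<Rightarrow> 'a list \<Rightarrow> bool" where
  "is_path H p \<longleftrightarrow> p \<noteq> [] \<and> (\<forall>i. Suc i < length p \<longrightarrow> {p ! i, p ! Suc i} \<in> H)"

definition hop_reach :: "'a set set \<Rightarrow> nat \<Rightarrow> 'a \<Rightarrow> 'a \<Rightarrow> bool" where
  "hop_reach H t u v \<longleftrightarrow>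
     (\<exists>p. is_path H p \<and> hd p = u \<and> last p = v \<and> length p - 1 \<le> t)"

definition N_hop :: "'a set set \<Rightarrow> nat \<Rightarrow> 'a \<Rightarrow> 'a set" where
  "N_hop H t v = {u. u \<noteq> v \<and> hop_reach H t u v}"

definition sup_hop :: "'a set set \<Rightarrow> nat \<Rightarrow> 'a \<Rightarrow> 'a \<Rightarrow> nat" where
  "sup_hop H t u v = card (N_hop H t u \<inter> N_hop H t v)"

text \<open>Subgraphs are represented by their edge sets F \<subseteq> E; the support of each edge
is computed inside F. The property: every edge of F has support at least k - 2.\<close>
definition truss_prop :: "'a set set \<Rightarrow> nat \<Rightarrow> nat \<Rightarrow> bool" where
  "truss_prop F \<tau> k \<longleftrightarrow> (\<forall>u v. {u, v} \<in> F \<longrightarrow> int (sup_hop F \<tau> u v) \<ge> int k - 2)"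

definition is_truss :: "'a set set \<Rightarrow> nat \<Rightarrow> nat \<Rightarrow> 'a set set \<Rightarrow> bool" where
  "is_truss E \<tau> k F \<longleftrightarrow> F \<subseteq> E \<and> truss_prop F \<tau> k \<and>
     (\<forall>F'. F \<subset> F' \<and> F' \<subseteq> E \<longrightarrow> \<not> truss_prop F' \<tau> k)"

definition truss_number :: "'a set set \<Rightarrow> nat \<Rightarrow> 'a \<Rightarrow> 'a \<Rightarrow> nat" where
  "truss_number E \<tau> u v = (GREATEST k. \<exists>F. is_truss E \<tau> k F \<and> {u, v} \<in> F)"

definition omega_vertices :: "'a set \<Rightarrow> 'a set set \<Rightarrow> nat \<Rightarrow> 'a \<Rightarrow> 'a \<Rightarrow> 'a set" where
  "omega_vertices V E \<tau> u v =
     {u, v} \<union> {w \<in> V. hop_reach E (\<tau> div 2) w u \<or> hop_reach E (\<tau> div 2) w v}"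

end

theory Submission
  imports Defs
begin

(* Every vertex of \<Omega>(e) is within \<lfloor>\<tau>/2\<rfloor> hops of u or v, and such short paths to u or v
   never leave \<Omega>(e). Hence, inside the subgraph induced by \<Omega>(e), any two of its vertices
   are joined by a path of length at most \<lfloor>\<tau>/2\<rfloor> + 1 + \<lfloor>\<tau>/2\<rfloor> = \<tau> through the edge (u,v),
   so every edge of that subgraph has all other vertices of \<Omega>(e) in its \<tau>-hop support.
   The subgraph thus satisfies the (|\<Omega>(e)|,\<tau>)-truss condition and extends to a maximal one. *)

lemma hop_reach_refl: "hop_reach H t x x"
  unfolding hop_reach_def by (intro exI[of _ "[x]"]) (simp add: is_path_def)

lemma hop_reach_mono: "hop_reach H t x y \<Longrightarrow> t \<le> s \<Longrightarrow> hop_reach H s x y"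
  unfolding hop_reach_def by force

lemma hop_reach_0_iff: "hop_reach H 0 x y \<longleftrightarrow> x = y"
proof
  assume "hop_reach H 0 x y"
  then obtain p where p: "is_path H p" "hd p = x" "last p = y" "length p \<le> 1"
    unfolding hop_reach_def by auto
  then obtain a where "p = [a]"
    by (cases p) (auto simp: is_path_def)
  with p show "x = y" by simp
qed (simp add: hop_reach_refl)

lemma hop_reach_Suc_iff:
  "hop_reach H (Suc t) x y \<longleftrightarrow> x = y \<or> (\<exists>z. {x, z} \<in> H \<and> hop_reach H t z y)"
proof
  assume "hop_reach H (Suc t) x y"
  then obtain p where p: "is_path H p" "hd p = x" "last p = y" "length p - 1 \<le> Suc t"
    unfolding hop_reach_def by blast
  then obtain q where pq: "p = x # q"
    by (cases p) (auto simp: is_path_def)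
  show "x = y \<or> (\<exists>z. {x, z} \<in> H \<and> hop_reach H t z y)"
  proof (cases "q = []")
    case True
    then show ?thesis using p pq by simp
  next
    case False
    have "{x, hd q} \<in> H"
      using p(1) pq False unfolding is_path_def by (cases q) force+
    moreover have "is_path H q"
      using p(1) pq False unfolding is_path_def by (metis Suc_less_eq length_Cons nth_Cons_Suc)
    then have "hop_reach H t (hd q) y"
      unfolding hop_reach_def using p pq False by (intro exI[of _ q]) auto
    ultimately show ?thesis by blast
  qed
next
  assume "x = y \<or> (\<exists>z. {x, z} \<in> H \<and> hop_reach H t z y)"
  then show "hop_reach H (Suc t) x y"
  proof
    assume "\<exists>z. {x, z} \<in> H \<and> hop_reach H t z y"
    then obtain q where e: "{x, hd q} \<in> H"
      and q: "is_path H q" "last q = y" "length q - 1 \<le> t"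
      unfolding hop_reach_def by blast
    have "q \<noteq> []" using q by (simp add: is_path_def)
    have "is_path H (x # q)"
      unfolding is_path_def
    proof (intro conjI allI impI)
      fix i assume "Suc i < length (x # q)"
      then show "{(x # q) ! i, (x # q) ! Suc i} \<in> H"
        using e q(1) \<open>q \<noteq> []\<close> by (cases i) (auto simp: is_path_def hd_conv_nth)
    qed simp
    then show ?thesis
      unfolding hop_reach_def using q \<open>q \<noteq> []\<close> by (intro exI[of _ "x # q"]) auto
  qed (simp add: hop_reach_refl)
qed

lemma hop_reach_trans:
  "hop_reach H s x y \<Longrightarrow> hop_reach H t y z \<Longrightarrow> hop_reach H (s + t) x z"
proof (induction s arbitrary: x)
  case 0
  then show ?case by (simp add: hop_reach_0_iff)
next
  case (Suc s)
  from Suc.prems(1) consider "x = y" | w where "{x, w} \<in> H" "hop_reach H s w y"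
    unfolding hop_reach_Suc_iff by blast
  then show ?case
  proof cases
    case 1
    then show ?thesis using Suc.prems(2) hop_reach_mono by fastforce
  next
    case 2
    then show ?thesis using Suc.IH Suc.prems(2) by (auto simp: hop_reach_Suc_iff)
  qed
qed

lemma hop_reach_edge: "{x, y} \<in> H \<Longrightarrow> hop_reach H 1 x y"
  by (simp add: hop_reach_Suc_iff hop_reach_0_iff)

lemma hop_reach_sym: "hop_reach H t x y \<Longrightarrow> hop_reach H t y x"
proof (induction t arbitrary: x)
  case 0
  then show ?case by (simp add: hop_reach_0_iff)
next
  case (Suc t)
  from Suc.prems consider "x = y" | w where "{x, w} \<in> H" "hop_reach H t w y"
    unfolding hop_reach_Suc_iff by blast
  then show ?case
  proof cases
    case 1
    then show ?thesis by (simp add: hop_reach_refl)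
  next
    case 2
    then have "hop_reach H 1 w x"
      by (intro hop_reach_edge) (simp add: insert_commute)
    with hop_reach_trans[OF Suc.IH[OF 2(2)] this] show ?thesis by simp
  qed
qed

lemma hop_reach_in_Union: "hop_reach H t x y \<Longrightarrow> x \<noteq> y \<Longrightarrow> x \<in> \<Union>H"
  by (cases t) (auto simp: hop_reach_0_iff hop_reach_Suc_iff)

lemma N_hop_subset_Union: "N_hop H t x \<subseteq> \<Union>H"
  unfolding N_hop_def using hop_reach_in_Union by fast

lemma sup_hop_le_card_Union: "finite (\<Union>H) \<Longrightarrow> sup_hop H t x y \<le> card (\<Union>H)"
  unfolding sup_hop_def by (rule card_mono[OF _ le_infI1[OF N_hop_subset_Union]])

definition induced_edges :: "'a set set \<Rightarrow> 'a set \<Rightarrow> 'a set set" where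
  "induced_edges E S = {e \<in> E. e \<subseteq> S}"

lemma hop_reach_induced_edges:
  assumes "\<And>x. hop_reach E t x c \<Longrightarrow> x \<in> S" and "hop_reach E t w c"
  shows "hop_reach (induced_edges E S) t w c"
  using assms
proof (induction t arbitrary: w)
  case 0
  then show ?case by (simp add: hop_reach_0_iff)
next
  case (Suc t)
  show ?case
  proof (cases "w = c")
    case True
    then show ?thesis by (simp add: hop_reach_refl)
  next
    case False
    then obtain z where z: "{w, z} \<in> E" "hop_reach E t z c"
      using Suc.prems(2) unfolding hop_reach_Suc_iff by blast
    have closed: "hop_reach E t x c \<Longrightarrow> x \<in> S" for x
      using Suc.prems(1) hop_reach_mono[of E t x c "Suc t"] by simp
    have "w \<in> S" using Suc.prems(1)[OF Suc.prems(2)] .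
    moreover have "z \<in> S" using closed z(2) .
    ultimately have "{w, z} \<in> induced_edges E S"
      using z(1) by (simp add: induced_edges_def)
    moreover have "hop_reach (induced_edges E S) t z c"
      using Suc.IH[OF closed z(2)] .
    ultimately show ?thesis unfolding hop_reach_Suc_iff by blast
  qed
qed

lemma truss_prop_card_if_pairwise_hop_reach:
  assumes "finite S" and "\<Union>F \<subseteq> S" and "\<And>x y. x \<in> S \<Longrightarrow> y \<in> S \<Longrightarrow> hop_reach F \<tau> x y"
  shows "truss_prop F \<tau> (card S)"
  unfolding truss_prop_def
proof (intro allI impI)
  fix a b assume "{a, b} \<in> F"
  then have "a \<in> S" "b \<in> S" using assms(2) by auto
  then have "S - {a, b} \<subseteq> N_hop F \<tau> a \<inter> N_hop F \<tau> b"
    unfolding N_hop_def using assms(3) by blast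
  moreover have "finite (N_hop F \<tau> a)"
    using N_hop_subset_Union assms(1,2) finite_subset by metis
  ultimately have "card (S - {a, b}) \<le> sup_hop F \<tau> a b"
    unfolding sup_hop_def by (simp add: card_mono)
  moreover have "card {a, b} \<le> 2"
    by (cases "a = b") simp_all
  then have "card S - 2 \<le> card (S - {a, b})"
    using diff_card_le_card_Diff[of "{a, b}" S] by simp
  ultimately show "int (sup_hop F \<tau> a b) \<ge> int (card S) - 2" by linarith
qed

lemma ex_is_truss_superset:
  assumes "finite E" and "F \<subseteq> E" and "truss_prop F \<tau> k"
  shows "\<exists>M. is_truss E \<tau> k M \<and> F \<subseteq> M"
proof -
  let ?S = "{F'. F' \<subseteq> E \<and> truss_prop F' \<tau> k}"
  have "?S \<subseteq> Pow E" by blast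
  then have "finite ?S"
    by (rule finite_subset) (simp add: assms(1))
  moreover have "F \<in> ?S" using assms(2,3) by simp
  ultimately obtain M where "M \<in> ?S" "F \<subseteq> M" and "\<forall>M' \<in> ?S. M \<subseteq> M' \<longrightarrow> M = M'"
    using finite_has_maximal2 by meson
  then have "is_truss E \<tau> k M"
    unfolding is_truss_def by (auto dest: psubset_imp_subset)
  with \<open>F \<subseteq> M\<close> show ?thesis by blast
qed

lemma truss_prop_le_card_Union:
  assumes "truss_prop F \<tau> k" and "{u, v} \<in> F" and "finite (\<Union>F)"
  shows "k \<le> card (\<Union>F) + 2"
  using assms sup_hop_le_card_Union[OF assms(3), of \<tau> u v] unfolding truss_prop_def by force

lemma le_truss_number:
  assumes "finite (\<Union>E)" and "F \<subseteq> E" and "truss_prop F \<tau> k" and "{u, v} \<in> F"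
  shows "k \<le> truss_number E \<tau> u v"
proof -
  obtain M where M: "is_truss E \<tau> k M" "F \<subseteq> M"
    using ex_is_truss_superset[OF finite_UnionD[OF assms(1)] assms(2,3)] by blast
  have "k' \<le> card (\<Union>E) + 2" if "is_truss E \<tau> k' M'" "{u, v} \<in> M'" for k' M'
  proof -
    have "\<Union>M' \<subseteq> \<Union>E" using that(1) unfolding is_truss_def by blast
    with that assms(1) show ?thesis
      using truss_prop_le_card_Union[of M' \<tau> k' u v] card_mono[of "\<Union>E" "\<Union>M'"]
      unfolding is_truss_def by (fastforce dest: finite_subset)
  qed
  then show ?thesis
    unfolding truss_number_def using M assms(4)
    by (intro Greatest_le_nat[where b = "card (\<Union>E) + 2"]) blast+
qed

lemma simple_graph_Union_subset: "simple_graph V E \<Longrightarrow> \<Union>E \<subseteq> V"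
  unfolding simple_graph_def by fastforce

lemma omega_vertices_subset: "simple_graph V E \<Longrightarrow> {u, v} \<in> E \<Longrightarrow> omega_vertices V E \<tau> u v \<subseteq> V"
  unfolding omega_vertices_def using simple_graph_Union_subset by blast

lemma hop_reach_center_in_omega_vertices:
  assumes "simple_graph V E" and "c \<in> {u, v}" and "hop_reach E (\<tau> div 2) x c"
  shows "x \<in> omega_vertices V E \<tau> u v"
  using assms hop_reach_in_Union[OF assms(3)] simple_graph_Union_subset[OF assms(1)]
  unfolding omega_vertices_def by blast

lemma hop_reach_induced_omega_vertices:
  assumes "simple_graph V E" and "{u, v} \<in> E" and "odd \<tau>"
    and "x \<in> omega_vertices V E \<tau> u v" and "y \<in> omega_vertices V E \<tau> u v"
  shows "hop_reach (induced_edges E (omega_vertices V E \<tau> u v)) \<tau> x y"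
proof -
  let ?\<Omega> = "omega_vertices V E \<tau> u v" and ?h = "\<tau> div 2"
  let ?F = "induced_edges E ?\<Omega>"
  have to_center: "\<exists>c \<in> {u, v}. hop_reach ?F ?h z c" if "z \<in> ?\<Omega>" for z
  proof -
    have "z = u \<or> z = v \<or> hop_reach E ?h z u \<or> hop_reach E ?h z v"
      using that unfolding omega_vertices_def by blast
    then obtain c where c: "c \<in> {u, v}" "hop_reach E ?h z c"
      using hop_reach_refl[of E ?h u] hop_reach_refl[of E ?h v] by blast
    have "hop_reach ?F ?h z c"
      using hop_reach_induced_edges[OF hop_reach_center_in_omega_vertices[OF assms(1) c(1)] c(2)] .
    with c(1) show ?thesis ..
  qed
  obtain c d where "c \<in> {u, v}" "d \<in> {u, v}" and xc: "hop_reach ?F ?h x c"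
    and yd: "hop_reach ?F ?h y d"
    using to_center assms(4,5) by meson
  have "{u, v} \<in> ?F"
    using assms(2) unfolding induced_edges_def omega_vertices_def by blast
  then have "hop_reach ?F 1 u v"
    by (rule hop_reach_edge)
  with \<open>c \<in> {u, v}\<close> \<open>d \<in> {u, v}\<close> have cd: "hop_reach ?F 1 c d"
    using hop_reach_sym[of ?F 1 u v] hop_reach_refl[of ?F 1] by auto
  have "hop_reach ?F (?h + 1 + ?h) x y"
    using hop_reach_trans[OF hop_reach_trans[OF xc cd] hop_reach_sym[OF yd]] .
  moreover have "?h + 1 + ?h = \<tau>"
    using assms(3) by presburger
  ultimately show ?thesis by simp
qed

theorem lemma6:
  fixes V :: "'a set" and E :: "'a set set" and \<tau> :: nat and u v :: 'a
  assumes "simple_graph V E"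
    and "odd \<tau>" and "\<tau> \<ge> 1"
    and "{u, v} \<in> E"
  shows "truss_number E \<tau> u v \<ge> card (omega_vertices V E \<tau> u v)"
proof -
  let ?\<Omega> = "omega_vertices V E \<tau> u v"
  have "finite V" using assms(1) by (simp add: simple_graph_def)
  then have "finite (\<Union>E)" and "finite ?\<Omega>"
    using simple_graph_Union_subset omega_vertices_subset assms(1,4) finite_subset by metis+
  moreover have "truss_prop (induced_edges E ?\<Omega>) \<tau> (card ?\<Omega>)"
    using \<open>finite ?\<Omega>\<close> hop_reach_induced_omega_vertices[OF assms(1,4,2)]
    by (intro truss_prop_card_if_pairwise_hop_reach) (auto simp: induced_edges_def)
  moreover have "{u, v} \<in> induced_edges E ?\<Omega>"
    using assms(4) unfolding induced_edges_def omega_vertices_def by blast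
  ultimately show ?thesis
    using le_truss_number[of E "induced_edges E ?\<Omega>"] by (simp add: induced_edges_def)
qed

end
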